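(* Consider an infinite balls-in-bins process with $d\ge1$ labeled bins: at each time $t=1,2,\ldots$ one ball is placed into a bin chosen uniformly at random from $\{1,\ldots,d\}$, independently over time, and $N^{(i)}_t$ denotes the number of balls in bin $i$ at time $t$. Then almost surely: (1) for each fixed $i\in[d]$, $N^{(i)}_t=\max_{j\in[d]}N^{(j)}_t$ for infinitely many $t$; (2) for each fixed $i,j\in[d]$, $N^{(i)}_t=N^{(j)}_t=\max_{k\in[d]}N^{(k)}_t$ for infinitely many $t$. *)

theory Defs
  imports "HOL-Probability.Probability"
begin

definition bin_count :: "(nat \<Rightarrow> 'a \<Rightarrow> nat) \<Rightarrow> nat \<Rightarrow> nat \<Rightarrow> 'a \<Rightarrow> nat" where
  "bin_count X i t \<omega> = card {s \<in> {1..t}. X s \<omega> = i}"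

definition max_load :: "(nat \<Rightarrow> 'a \<Rightarrow> nat) \<Rightarrow> nat \<Rightarrow> nat \<Rightarrow> 'a \<Rightarrow> nat" where
  "max_load X d t \<omega> = Max ((\<lambda>k. bin_count X k t \<omega>) ` {1..d})"

end

theory Submission
  imports Defs
begin

text \<open>At every time some bin holds the maximal load, so almost surely some bin leads infinitely
  often. Relabelling the bins by a permutation preserves the law of the process, so every bin leads
  infinitely often with the same positive probability.

  That two bins \<open>i\<close> and \<open>j\<close> are infinitely often both within some fixed distance \<open>m\<close> of the
  maximal load is a tail event, hence has probability 0 or 1. On this event they almost surely share the
  maximum infinitely often, by a conditional Borel--Cantelli argument: whenever both are within \<open>m\<close> of
  the lead, the next \<open>2 m\<close> balls bring both exactly to the maximum with probability at least
  \<open>(1 / d) ^ (2 m)\<close>, whatever happened before. So an event "\<open>i\<close> and \<open>j\<close> lead together infinitely often"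
  of positive probability has probability 1.

  Finally, if every bin leads infinitely often, some two distinct bins lead together infinitely often:
  otherwise, from some time on, the current leader could never be caught up with. Hence some pair leads
  together infinitely often with positive probability, and by exchangeability so does every pair.\<close>

section \<open>Loads and leaders\<close>

definition load :: "(nat \<Rightarrow> 'b) \<Rightarrow> 'b \<Rightarrow> nat \<Rightarrow> nat" where
  "load x k t = card {s \<in> {1..t}. x s = k}"

definition load_after :: "nat \<Rightarrow> (nat \<Rightarrow> 'b) \<Rightarrow> 'b \<Rightarrow> nat \<Rightarrow> nat" where
  "load_after n x k t = card {s \<in> {n<..t}. x s = k}"

definition leads :: "'b set \<Rightarrow> 'b \<Rightarrow> (nat \<Rightarrow> 'b) \<Rightarrow> nat \<Rightarrow> bool" where
  "leads B k x t \<longleftrightarrow> (\<forall>l\<in>B. load x l t \<le> load x k t)"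

definition within_lead :: "'b set \<Rightarrow> nat \<Rightarrow> 'b \<Rightarrow> (nat \<Rightarrow> 'b) \<Rightarrow> nat \<Rightarrow> bool" where
  "within_lead B m k x t \<longleftrightarrow> (\<forall>l\<in>B. load x l t \<le> load x k t + m)"

definition within_lead_after :: "nat \<Rightarrow> 'b set \<Rightarrow> nat \<Rightarrow> 'b \<Rightarrow> (nat \<Rightarrow> 'b) \<Rightarrow> nat \<Rightarrow> bool" where
  "within_lead_after n B m k x t \<longleftrightarrow> (\<forall>l\<in>B. load_after n x l t \<le> load_after n x k t + m)"

lemma load_Suc: "load x k (Suc t) = load x k t + (if x (Suc t) = k then 1 else 0)"
proof -
  have "{s \<in> {1..Suc t}. x s = k} = {s \<in> {1..t}. x s = k} \<union> (if x (Suc t) = k then {Suc t} else {})"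
    by (auto simp: le_Suc_eq)
  then show ?thesis
    by (simp add: load_def)
qed

lemma load_cong: "(\<And>s. s \<in> {1..t} \<Longrightarrow> x s = y s) \<Longrightarrow> load x k t = load y k t"
  unfolding load_def by (intro arg_cong[where f = card]) auto

lemma load_le: "load x k t \<le> t"
proof -
  have "load x k t \<le> card {1..t}"
    unfolding load_def by (intro card_mono) auto
  then show ?thesis
    by simp
qed

lemma load_split: "n \<le> t \<Longrightarrow> load x k t = load x k n + load_after n x k t"
  unfolding load_def load_after_def
  by (subst card_Un_disjoint[symmetric]) (auto intro!: arg_cong[where f = card])

lemma within_lead_after_shift:
  assumes "n \<le> t" "within_lead B m k x t"
  shows "within_lead_after n B (m + n) k x t"
  unfolding within_lead_after_def
proof
  fix l assume "l \<in> B"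
  then have "load x l t \<le> load x k t + m"
    using assms(2) by (simp add: within_lead_def)
  then show "load_after n x l t \<le> load_after n x k t + (m + n)"
    using load_split[OF assms(1), of x l] load_split[OF assms(1), of x k] load_le[of x k n] by linarith
qed

lemma within_lead_shift:
  assumes "n \<le> t" "within_lead_after n B m k x t"
  shows "within_lead B (m + n) k x t"
  unfolding within_lead_def
proof
  fix l assume "l \<in> B"
  then have "load_after n x l t \<le> load_after n x k t + m"
    using assms(2) by (simp add: within_lead_after_def)
  then show "load x l t \<le> load x k t + (m + n)"
    using load_split[OF assms(1), of x l] load_split[OF assms(1), of x k] load_le[of x l n] by linarith
qed

lemma leads_imp_within_lead: "leads B k x t \<Longrightarrow> within_lead B m k x t"
  unfolding leads_def within_lead_def by (auto intro: trans_le_add1)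

lemma leads_iff_Max:
  assumes "finite B" "k \<in> B"
  shows "leads B k x t \<longleftrightarrow> load x k t = Max ((\<lambda>l. load x l t) ` B)"
proof -
  have "Max ((\<lambda>l. load x l t) ` B) \<le> load x k t \<longleftrightarrow> leads B k x t"
    using assms by (subst Max_le_iff) (auto simp: leads_def)
  moreover have "load x k t \<le> Max ((\<lambda>l. load x l t) ` B)"
    using assms by simp
  ultimately show ?thesis
    by linarith
qed

lemma exists_leader:
  assumes "finite B" "B \<noteq> {}"
  shows "\<exists>k\<in>B. leads B k x t"
proof -
  have "Max ((\<lambda>l. load x l t) ` B) \<in> (\<lambda>l. load x l t) ` B"
    using assms by (intro Max_in) auto
  then obtain k where "k \<in> B" "load x k t = Max ((\<lambda>l. load x l t) ` B)"
    by auto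
  then show ?thesis
    using leads_iff_Max[OF assms(1)] by blast
qed

lemma some_bin_leads_infinitely_often:
  assumes "finite B" "B \<noteq> {}"
  shows "\<exists>k\<in>B. \<exists>\<^sub>\<infinity>t. leads B k x t"
proof -
  have "\<exists>\<^sub>\<infinity>t. \<exists>k\<in>B. leads B k x t"
    using exists_leader[OF assms] by (simp add: INFM_nat_le)
  then show ?thesis
    by (subst (asm) INFM_finite_Bex_distrib[OF assms(1)])
qed

lemma unique_leader_leads_Suc:
  assumes "leads B k x t" and "\<And>l. l \<in> B \<Longrightarrow> l \<noteq> k \<Longrightarrow> \<not> leads B l x t"
  shows "leads B k x (Suc t)"
  unfolding leads_def
proof
  fix l assume l: "l \<in> B"
  have le: "load x l t \<le> load x k t"
    using assms(1) l by (simp add: leads_def)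
  show "load x l (Suc t) \<le> load x k (Suc t)"
  proof (cases "x (Suc t) = l \<and> l \<noteq> k")
    case True
    have "\<not> leads B l x t"
      using assms(2) l True by blast
    moreover have "leads B l x t" if "load x l t = load x k t"
      using assms(1) that by (simp add: leads_def)
    ultimately have "load x l t \<noteq> load x k t"
      by blast
    with le True show ?thesis
      by (simp add: load_Suc)
  next
    case False
    with le show ?thesis
      by (auto simp: load_Suc)
  qed
qed

text \<open>If from some time on no two bins ever share the lead, the leader at that time keeps the lead
  forever, so no other bin can lead infinitely often.\<close>
lemma two_bins_lead_infinitely_often:
  assumes "finite B" and "k \<in> B" "l \<in> B" "k \<noteq> l"
    and every_bin: "\<forall>i\<in>B. \<exists>\<^sub>\<infinity>t. leads B i x t"
  shows "\<exists>i\<in>B. \<exists>j\<in>B. i \<noteq> j \<and> (\<exists>\<^sub>\<infinity>t. leads B i x t \<and> leads B j x t)"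
proof (rule ccontr)
  assume no_pair: "\<not> ?thesis"
  have "\<forall>\<^sub>\<infinity>t. \<not> (i \<noteq> j \<and> leads B i x t \<and> leads B j x t)" if "i \<in> B" "j \<in> B" for i j
  proof -
    have "\<not> (\<exists>\<^sub>\<infinity>t. i \<noteq> j \<and> leads B i x t \<and> leads B j x t)"
      using no_pair that by simp
    then show ?thesis
      by (simp only: not_INFM)
  qed
  then have "\<forall>\<^sub>\<infinity>t. \<forall>i\<in>B. \<forall>j\<in>B. \<not> (i \<noteq> j \<and> leads B i x t \<and> leads B j x t)"
    using \<open>finite B\<close> by (intro eventually_ball_finite ballI) auto
  then obtain n where n: "\<And>t i j. t \<ge> n \<Longrightarrow> i \<in> B \<Longrightarrow> j \<in> B \<Longrightarrow> i \<noteq> j \<Longrightarrow> leads B i x t \<Longrightarrow> \<not> leads B j x t"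
    by (auto simp: MOST_nat_le)
  obtain k0 where k0: "k0 \<in> B" "leads B k0 x n"
    using exists_leader[of B x n] assms(1,2) by auto
  have stays: "leads B k0 x t" if "t \<ge> n" for t
    using that
  proof (induction t rule: dec_induct)
    case (step t)
    have others: "\<not> leads B l x t" if "l \<in> B" "l \<noteq> k0" for l
      using n[of t k0 l] step that k0(1) by blast
    show ?case
      using step.IH others by (rule unique_leader_leads_Suc)
  qed (fact k0(2))
  obtain k1 where k1: "k1 \<in> B" "k1 \<noteq> k0"
    using assms(2-4) by blast
  then obtain t where "t \<ge> n" "leads B k1 x t"
    using every_bin by (auto simp: INFM_nat_le)
  then show False
    using n[of t k0 k1] k0(1) k1 stays[of t] by blast
qed

lemma INFM_window:
  fixes P :: "nat \<Rightarrow> bool"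
  assumes "\<exists>\<^sub>\<infinity>s. \<exists>t\<in>{s..s + L}. P t"
  shows "\<exists>\<^sub>\<infinity>t. P t"
  unfolding INFM_nat_le
proof
  fix n
  obtain s t where "s \<ge> n" "t \<in> {s..s + L}" "P t"
    using assms unfolding INFM_nat_le by blast
  then show "\<exists>t\<ge>n. P t"
    by (intro exI[of _ t]) auto
qed

definition recurrently_near_lead :: "'b set \<Rightarrow> 'b \<Rightarrow> 'b \<Rightarrow> (nat \<Rightarrow> 'b) \<Rightarrow> bool" where
  "recurrently_near_lead B i j x \<longleftrightarrow> (\<exists>m. \<exists>\<^sub>\<infinity>t. within_lead B m i x t \<and> within_lead B m j x t)"

lemma ex_INFM_shift_iff:
  fixes P Q :: "nat \<Rightarrow> nat \<Rightarrow> bool"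
  assumes "\<And>m t. n \<le> t \<Longrightarrow> P m t \<Longrightarrow> Q (m + n) t" and "\<And>m t. n \<le> t \<Longrightarrow> Q m t \<Longrightarrow> P (m + n) t"
  shows "(\<exists>m. \<exists>\<^sub>\<infinity>t. P m t) \<longleftrightarrow> (\<exists>m. \<exists>\<^sub>\<infinity>t. Q m t)"
proof -
  have shift: "\<exists>m. \<exists>\<^sub>\<infinity>t. R' m t" if "\<exists>\<^sub>\<infinity>t. R m t" and "\<And>m t. n \<le> t \<Longrightarrow> R m t \<Longrightarrow> R' (m + n) t"
    for R R' :: "nat \<Rightarrow> nat \<Rightarrow> bool" and m
  proof -
    have "\<exists>\<^sub>\<infinity>t. R m t \<and> n \<le> t"
      using that(1) MOST_ge_nat[of n] by (rule INFM_conjI)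
    then have "\<exists>\<^sub>\<infinity>t. R' (m + n) t"
      by (rule INFM_mono) (use that(2) in blast)
    then show ?thesis
      by blast
  qed
  show ?thesis
    using shift[of P _ Q] shift[of Q _ P] assms by blast
qed

text \<open>Changing the first \<open>n\<close> balls moves each load by at most \<open>n\<close>, so recurrently staying near the
  lead is a tail event.\<close>
lemma recurrently_near_lead_iff_after:
  "recurrently_near_lead B i j x \<longleftrightarrow>
     (\<exists>m. \<exists>\<^sub>\<infinity>t. within_lead_after n B m i x t \<and> within_lead_after n B m j x t)"
  unfolding recurrently_near_lead_def
  by (rule ex_INFM_shift_iff) (auto intro: within_lead_after_shift within_lead_shift)

lemma load_comp_inj: "inj \<sigma> \<Longrightarrow> load (\<sigma> \<circ> x) (\<sigma> a) t = load x a t"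
  unfolding load_def by (simp add: inj_eq)

lemma leads_comp_permutes:
  assumes "\<sigma> permutes B"
  shows "leads B (\<sigma> k) (\<sigma> \<circ> x) t \<longleftrightarrow> leads B k x t"
proof -
  have "leads B (\<sigma> k) (\<sigma> \<circ> x) t \<longleftrightarrow> (\<forall>l\<in>\<sigma> ` B. load (\<sigma> \<circ> x) l t \<le> load (\<sigma> \<circ> x) (\<sigma> k) t)"
    using permutes_image[OF assms] by (simp add: leads_def)
  also have "\<dots> \<longleftrightarrow> leads B k x t"
    using permutes_inj[OF assms] by (simp add: leads_def load_comp_inj)
  finally show ?thesis .
qed

lemma exists_permutes_pair:
  assumes "i \<in> B" "j \<in> B" "i \<noteq> j" "k \<in> B" "l \<in> B" "k \<noteq> l"
  shows "\<exists>\<sigma>. \<sigma> permutes B \<and> \<sigma> i = k \<and> \<sigma> j = l"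
proof -
  define \<tau> where "\<tau> = Transposition.transpose i k"
  define \<sigma> where "\<sigma> = Transposition.transpose (\<tau> j) l \<circ> \<tau>"
  have \<tau>: "\<tau> permutes B"
    unfolding \<tau>_def using assms(1,4) by (rule permutes_swap_id)
  then have "\<tau> j \<in> B"
    using assms(2) by (simp add: permutes_in_image)
  then have "\<sigma> permutes B"
    unfolding \<sigma>_def using \<tau> assms(5) by (intro permutes_compose permutes_swap_id)
  moreover have "\<sigma> i = k" "\<sigma> j = l"
    using assms(3,6) by (auto simp: \<sigma>_def \<tau>_def Transposition.transpose_def)
  ultimately show ?thesis
    by blast
qed

text \<open>The continuation first fills up \<open>i\<close> to the current maximum, then \<open>j\<close>; both gaps are at most \<open>m\<close>.\<close>
lemma catch_up_continuation:
  assumes "finite B" "i \<in> B" "j \<in> B" "within_lead B m i x s" "within_lead B m j x s"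
  shows "\<exists>w. (\<forall>q\<in>{1..2*m}. w q \<in> B) \<and>
           (\<forall>y. (\<forall>r\<in>{1..s}. y r = x r) \<longrightarrow> (\<forall>q\<in>{1..2*m}. y (s + q) = w q) \<longrightarrow>
                (\<exists>t\<in>{s..s + 2*m}. leads B i y t \<and> leads B j y t))"
proof -
  define top where "top = Max ((\<lambda>l. load x l s) ` B)"
  define a where "a = top - load x i s"
  define b where "b = top - load x j s"
  define w where "w q = (if q \<le> a then i else j)" for q
  have le_top: "load x l s \<le> top" if "l \<in> B" for l
    unfolding top_def using assms(1) that by simp
  have top_le: "top \<le> load x k s + m" if "within_lead B m k x s" for k
    unfolding top_def using assms(1,2) that by (subst Max_le_iff) (auto simp: within_lead_def)
  have ab: "a + b \<le> 2*m"
    using top_le[OF assms(4)] top_le[OF assms(5)] by (simp add: a_def b_def)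
  show ?thesis
  proof (intro exI conjI allI impI)
    show "\<forall>q\<in>{1..2*m}. w q \<in> B"
      using assms(2,3) by (simp add: w_def)
    fix y assume prefix: "\<forall>r\<in>{1..s}. y r = x r" and suffix: "\<forall>q\<in>{1..2*m}. y (s + q) = w q"
    have run: "load y l (s + c) = load x l s + (if l = i then min c a else 0) + (if l = j then c - a else 0)"
      if "c \<le> a + b" for c l
      using that
    proof (induction c)
      case 0
      have "load y l s = load x l s"
        using prefix by (intro load_cong) auto
      then show ?case
        by simp
    next
      case (Suc c)
      then have "y (Suc (s + c)) = w (Suc c)"
        using suffix[rule_format, of "Suc c"] ab by simp
      with Suc show ?case
        by (auto simp: load_Suc w_def)
    qed
    have final: "load y l (s + a + b) = load x l s + (if l = i then a else 0) + (if l = j then b else 0)" for l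
      using run[of "a + b" l] by (simp add: add.assoc)
    have "load x i s + a = top" "load x j s + b = top"
      using le_top assms(2,3) by (auto simp: a_def b_def)
    then have "leads B i y (s + a + b) \<and> leads B j y (s + a + b)"
      using le_top unfolding leads_def final by fastforce
    moreover have "s + a + b \<in> {s..s + 2*m}"
      using ab by simp
    ultimately show "\<exists>t\<in>{s..s + 2*m}. leads B i y t \<and> leads B j y t"
      by blast
  qed
qed

definition determined_by :: "nat set \<Rightarrow> ((nat \<Rightarrow> 'b) \<Rightarrow> bool) \<Rightarrow> bool" where
  "determined_by J P \<longleftrightarrow> (\<forall>x y. (\<forall>s\<in>J. x s = y s) \<longrightarrow> P x = P y)"

lemma determined_byD: "determined_by J P \<Longrightarrow> (\<And>s. s \<in> J \<Longrightarrow> x s = y s) \<Longrightarrow> P x = P y"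
  unfolding determined_by_def by blast

lemma determined_by_mono: "determined_by J P \<Longrightarrow> J \<subseteq> K \<Longrightarrow> determined_by K P"
  unfolding determined_by_def by blast

lemma determined_by_conj: "determined_by J P \<Longrightarrow> determined_by J Q \<Longrightarrow> determined_by J (\<lambda>x. P x \<and> Q x)"
  unfolding determined_by_def by blast

lemma determined_by_not: "determined_by J P \<Longrightarrow> determined_by J (\<lambda>x. \<not> P x)"
  unfolding determined_by_def by blast

lemma determined_by_Bex:
  "(\<And>t. t \<in> A \<Longrightarrow> determined_by J (Q t)) \<Longrightarrow> determined_by J (\<lambda>x. \<exists>t\<in>A. Q t x)"
  unfolding determined_by_def by blast

lemma determined_by_Bex_atLeastAtMost:
  assumes "\<And>t. determined_by {1..t} (Q t)"
  shows "determined_by {1..T} (\<lambda>x. \<exists>t\<in>{n..T}. Q t x)"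
proof (rule determined_by_Bex)
  fix t assume "t \<in> {n..T}"
  then show "determined_by {1..T} (Q t)"
    by (intro determined_by_mono[OF assms]) auto
qed

lemma determined_by_loads:
  fixes F :: "('b \<Rightarrow> nat) \<Rightarrow> bool"
  shows "determined_by {1..t} (\<lambda>x. F (\<lambda>l. load x l t))"
  unfolding determined_by_def
proof (intro allI impI)
  fix x y :: "nat \<Rightarrow> 'b" assume "\<forall>s\<in>{1..t}. x s = y s"
  then have "(\<lambda>l. load x l t) = (\<lambda>l. load y l t)"
    by (intro ext load_cong) auto
  then show "F (\<lambda>l. load x l t) = F (\<lambda>l. load y l t)"
    by simp
qed

lemma determined_by_loads_after:
  fixes F :: "('b \<Rightarrow> nat) \<Rightarrow> bool"
  shows "determined_by {n<..t} (\<lambda>x. F (\<lambda>l. load_after n x l t))"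
  unfolding determined_by_def
proof (intro allI impI)
  fix x y :: "nat \<Rightarrow> 'b" assume "\<forall>s\<in>{n<..t}. x s = y s"
  then have "(\<lambda>l. load_after n x l t) = (\<lambda>l. load_after n y l t)"
    unfolding load_after_def by (intro ext arg_cong[where f = card]) auto
  then show "F (\<lambda>l. load_after n x l t) = F (\<lambda>l. load_after n y l t)"
    by simp
qed

lemma determined_by_leads: "determined_by {1..t} (\<lambda>x. leads B k x t)"
  using determined_by_loads[of t "\<lambda>L. \<forall>l\<in>B. L l \<le> L k"] by (simp add: leads_def)

lemma determined_by_within_lead: "determined_by {1..t} (\<lambda>x. within_lead B m k x t)"
  using determined_by_loads[of t "\<lambda>L. \<forall>l\<in>B. L l \<le> L k + m"] by (simp add: within_lead_def)

lemma determined_by_within_lead_after: "determined_by {n<..t} (\<lambda>x. within_lead_after n B m k x t)"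
  using determined_by_loads_after[of n t "\<lambda>L. \<forall>l\<in>B. L l \<le> L k + m"]
  by (simp add: within_lead_after_def)

section \<open>Spaced hitting times\<close>

definition first_hit :: "(nat \<Rightarrow> (nat \<Rightarrow> 'b) \<Rightarrow> bool) \<Rightarrow> nat \<Rightarrow> (nat \<Rightarrow> 'b) \<Rightarrow> nat option" where
  "first_hit H a x = (if \<exists>s\<ge>a. H s x then Some (LEAST s. a \<le> s \<and> H s x) else None)"

text \<open>The \<open>k\<close>-th hit of \<open>H\<close> from time \<open>n\<close> on, each hit searched for more than \<open>L\<close> steps after the
  previous one, so that a condition \<open>G\<close> looking \<open>L\<close> steps ahead of a hit is settled before the next hit.\<close>
fun spaced_hit :: "(nat \<Rightarrow> (nat \<Rightarrow> 'b) \<Rightarrow> bool) \<Rightarrow> nat \<Rightarrow> nat \<Rightarrow> nat \<Rightarrow> (nat \<Rightarrow> 'b) \<Rightarrow> nat option" where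
  "spaced_hit H L n 0 x = first_hit H n x"
| "spaced_hit H L n (Suc k) x =
     (case spaced_hit H L n k x of None \<Rightarrow> None | Some r \<Rightarrow> first_hit H (r + L + 1) x)"

definition spaced_hits_miss ::
    "(nat \<Rightarrow> (nat \<Rightarrow> 'b) \<Rightarrow> bool) \<Rightarrow> (nat \<Rightarrow> (nat \<Rightarrow> 'b) \<Rightarrow> bool) \<Rightarrow> nat \<Rightarrow> nat \<Rightarrow> nat \<Rightarrow> (nat \<Rightarrow> 'b) \<Rightarrow> bool" where
  "spaced_hits_miss H G L n k x \<longleftrightarrow> (\<forall>k'<k. \<exists>r. spaced_hit H L n k' x = Some r \<and> \<not> G r x)"

lemma first_hit_SomeD:
  assumes "first_hit H a x = Some r"
  shows "a \<le> r" "H r x" "\<And>s. a \<le> s \<Longrightarrow> s < r \<Longrightarrow> \<not> H s x"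
proof -
  have ex: "\<exists>s. a \<le> s \<and> H s x" and r: "r = (LEAST s. a \<le> s \<and> H s x)"
    using assms by (auto simp: first_hit_def split: if_splits)
  show "a \<le> r" "H r x"
    using LeastI_ex[OF ex] r by auto
  show "\<not> H s x" if "a \<le> s" "s < r" for s
    using not_less_Least[of s "\<lambda>s. a \<le> s \<and> H s x"] that r by auto
qed

lemma first_hit_eqI:
  assumes "a \<le> r" "H r x" "\<And>s. a \<le> s \<Longrightarrow> s < r \<Longrightarrow> \<not> H s x"
  shows "first_hit H a x = Some r"
proof -
  have "(LEAST s. a \<le> s \<and> H s x) = r"
  proof (rule Least_equality)
    show "a \<le> r \<and> H r x"
      using assms(1,2) by simp
    show "r \<le> s" if "a \<le> s \<and> H s x" for s
      using assms(3)[of s] that by (meson not_le)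
  qed
  then show ?thesis
    using assms(1,2) by (auto simp: first_hit_def)
qed

lemma first_hit_agree:
  assumes H: "\<And>s. determined_by {1..s} (H s)" and hit: "first_hit H a x = Some r"
    and agree: "\<forall>s\<in>{1..r}. x s = y s"
  shows "first_hit H a y = Some r"
proof (rule first_hit_eqI)
  have same: "H s x = H s y" if "s \<le> r" for s
    using agree that by (intro determined_byD[OF H]) auto
  show "a \<le> r" "H r y"
    using first_hit_SomeD(1,2)[OF hit] same by auto
  show "\<not> H s y" if "a \<le> s" "s < r" for s
    using first_hit_SomeD(3)[OF hit that] same that by simp
qed

lemma first_hit_not_None: "\<exists>\<^sub>\<infinity>s. H s x \<Longrightarrow> first_hit H a x \<noteq> None"
  by (auto simp: first_hit_def INFM_nat_le)

lemma spaced_hit_SomeD: "spaced_hit H L n k x = Some r \<Longrightarrow> n \<le> r \<and> H r x"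
proof (induction k arbitrary: r)
  case 0
  then show ?case
    using first_hit_SomeD(1,2)[of H n x r] by simp
next
  case (Suc k)
  then obtain r0 where r0: "spaced_hit H L n k x = Some r0" "first_hit H (r0 + L + 1) x = Some r"
    by (auto split: option.splits)
  then show ?case
    using Suc.IH[OF r0(1)] first_hit_SomeD(1,2)[OF r0(2)] by simp
qed

lemma spaced_hit_not_None:
  assumes "\<exists>\<^sub>\<infinity>s. H s x"
  shows "spaced_hit H L n k x \<noteq> None"
proof (induction k)
  case 0
  then show ?case
    using first_hit_not_None[of H x, OF assms] by simp
next
  case (Suc k)
  then obtain r where "spaced_hit H L n k x = Some r"
    by blast
  then show ?case
    using first_hit_not_None[of H x, OF assms] by simp
qed

lemma spaced_hit_earlier:
  assumes "spaced_hit H L n k x = Some r" "k' < k"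
  shows "\<exists>r'. spaced_hit H L n k' x = Some r' \<and> r' + L < r"
  using assms
proof (induction k arbitrary: r)
  case (Suc k)
  then obtain r0 where r0: "spaced_hit H L n k x = Some r0" "first_hit H (r0 + L + 1) x = Some r"
    by (auto split: option.splits)
  have gap: "r0 + L < r"
    using first_hit_SomeD(1)[OF r0(2)] by simp
  show ?case
  proof (cases "k' = k")
    case True
    then show ?thesis
      using r0(1) gap by simp
  next
    case False
    then have "k' < k"
      using Suc.prems(2) by simp
    then obtain r' where "spaced_hit H L n k' x = Some r'" "r' + L < r0"
      using Suc.IH[OF r0(1)] by blast
    then show ?thesis
      using gap by auto
  qed
qed simp

lemma spaced_hit_agree:
  assumes H: "\<And>s. determined_by {1..s} (H s)"
  shows "spaced_hit H L n k x = Some r \<Longrightarrow> \<forall>s\<in>{1..r}. x s = y s \<Longrightarrow> spaced_hit H L n k y = Some r"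
proof (induction k arbitrary: r)
  case 0
  have "first_hit H n x = Some r"
    using "0.prems"(1) by simp
  then have "first_hit H n y = Some r"
    using "0.prems"(2) by (rule first_hit_agree[OF H])
  then show ?case
    by simp
next
  case (Suc k)
  then obtain r0 where r0: "spaced_hit H L n k x = Some r0" "first_hit H (r0 + L + 1) x = Some r"
    by (auto split: option.splits)
  have "r0 < r"
    using first_hit_SomeD(1)[OF r0(2)] by simp
  then have "\<forall>s\<in>{1..r0}. x s = y s"
    using Suc.prems(2) by auto
  then have "spaced_hit H L n k y = Some r0"
    by (rule Suc.IH[OF r0(1)])
  moreover have "first_hit H (r0 + L + 1) y = Some r"
    by (rule first_hit_agree[OF H r0(2) Suc.prems(2)])
  ultimately show ?case
    by simp
qed

text \<open>Since every earlier hit \<open>r'\<close> satisfies \<open>r' + L < r\<close>, the misses of \<open>G\<close> at those hits are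
  visible in the first \<open>r\<close> steps.\<close>
lemma determined_by_spaced_hits_miss:
  fixes H G :: "nat \<Rightarrow> (nat \<Rightarrow> 'b) \<Rightarrow> bool"
  assumes H: "\<And>s. determined_by {1..s} (H s)" and G: "\<And>s. determined_by {1..s + L} (G s)"
  shows "determined_by {1..r} (\<lambda>x. spaced_hits_miss H G L n k x \<and> spaced_hit H L n k x = Some r)"
proof -
  have transfer: "spaced_hits_miss H G L n k y \<and> spaced_hit H L n k y = Some r"
    if "spaced_hits_miss H G L n k x \<and> spaced_hit H L n k x = Some r"
      and agree: "\<forall>s\<in>{1..r}. x s = y s" for x y
  proof -
    have miss: "spaced_hits_miss H G L n k x" and hit: "spaced_hit H L n k x = Some r"
      using that(1) by auto
    have "spaced_hits_miss H G L n k y"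
      unfolding spaced_hits_miss_def
    proof (intro allI impI)
      fix k' assume "k' < k"
      then obtain r' where r': "spaced_hit H L n k' x = Some r'" "\<not> G r' x"
        using miss unfolding spaced_hits_miss_def by blast
      have "r' + L < r"
        using spaced_hit_earlier[OF hit \<open>k' < k\<close>] r'(1) by auto
      have "spaced_hit H L n k' y = Some r'"
        using agree \<open>r' + L < r\<close> by (intro spaced_hit_agree[OF H r'(1)]) auto
      moreover have "G r' x = G r' y"
        using agree \<open>r' + L < r\<close> by (intro determined_byD[OF G]) auto
      ultimately show "\<exists>r. spaced_hit H L n k' y = Some r \<and> \<not> G r y"
        using r'(2) by auto
    qed
    moreover have "spaced_hit H L n k y = Some r"
      by (rule spaced_hit_agree[OF H hit agree])
    ultimately show ?thesis
      by simp
  qed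
  show ?thesis
    unfolding determined_by_def
  proof (intro allI impI)
    fix x y :: "nat \<Rightarrow> 'b" assume agree: "\<forall>s\<in>{1..r}. x s = y s"
    then have agree_sym: "\<forall>s\<in>{1..r}. y s = x s"
      by simp
    show "(spaced_hits_miss H G L n k x \<and> spaced_hit H L n k x = Some r) =
          (spaced_hits_miss H G L n k y \<and> spaced_hit H L n k y = Some r)"
      using transfer[OF _ agree] transfer[OF _ agree_sym] by (rule iffI)
  qed
qed

lemma determined_by_spaced_hits_miss_Suc:
  fixes H G :: "nat \<Rightarrow> (nat \<Rightarrow> 'b) \<Rightarrow> bool"
  assumes H: "\<And>s. determined_by {1..s} (H s)" and G: "\<And>s. determined_by {1..s + L} (G s)"
  shows "determined_by {1..r + L}
           (\<lambda>x. (spaced_hits_miss H G L n k x \<and> spaced_hit H L n k x = Some r) \<and> \<not> G r x)"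
proof (rule determined_by_conj)
  show "determined_by {1..r + L} (\<lambda>x. spaced_hits_miss H G L n k x \<and> spaced_hit H L n k x = Some r)"
    by (rule determined_by_mono[OF determined_by_spaced_hits_miss[OF H G]]) auto
  show "determined_by {1..r + L} (\<lambda>x. \<not> G r x)"
    by (rule determined_by_not[OF G])
qed

lemma spaced_hits_miss_Suc:
  "spaced_hits_miss H G L n (Suc k) x \<longleftrightarrow>
     (\<exists>r. (spaced_hits_miss H G L n k x \<and> spaced_hit H L n k x = Some r) \<and> \<not> G r x)"
  unfolding spaced_hits_miss_def by (auto simp: less_Suc_eq)

lemma spaced_hits_miss_if_never_G:
  assumes "\<exists>\<^sub>\<infinity>s. H s x" "\<forall>s\<ge>n. \<not> G s x"
  shows "spaced_hits_miss H G L n k x"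
  unfolding spaced_hits_miss_def
proof (intro allI impI)
  fix k' :: nat
  obtain r where r: "spaced_hit H L n k' x = Some r"
    using spaced_hit_not_None[of H x L n k'] assms(1) by blast
  then show "\<exists>r. spaced_hit H L n k' x = Some r \<and> \<not> G r x"
    using spaced_hit_SomeD[OF r] assms(2) by auto
qed

context prob_space
begin

lemma ex_prob_pos_of_AE_bex:
  assumes "finite K" "\<And>k. k \<in> K \<Longrightarrow> A k \<in> events" and "AE \<omega> in M. \<exists>k\<in>K. \<omega> \<in> A k"
  shows "\<exists>k\<in>K. prob (A k) > 0"
proof (rule ccontr)
  assume no_pos: "\<not> (\<exists>k\<in>K. prob (A k) > 0)"
  have "A k \<in> null_sets M" if "k \<in> K" for k
  proof (rule null_setsI)
    have "prob (A k) = 0"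
      using no_pos that measure_nonneg[of M "A k"] by (meson antisym not_less)
    then show "emeasure M (A k) = 0"
      by (simp add: emeasure_eq_measure)
  qed (rule assms(2)[OF that])
  then have "AE \<omega> in M. \<forall>k\<in>K. \<omega> \<notin> A k"
    using assms(1) by (intro AE_finite_allI AE_not_in)
  with assms(3) have "AE \<omega> in M. False"
    by eventually_elim blast
  then show False
    by simp
qed

end

locale iid_uniform_process = prob_space M for M :: "'a measure" +
  fixes X :: "nat \<Rightarrow> 'a \<Rightarrow> 'b::countable" and B :: "'b set"
  assumes finite_bins: "finite B" and bins_nonempty: "B \<noteq> {}"
    and indep: "indep_vars (\<lambda>_. count_space UNIV) X {1..}"
    and uniform: "\<And>t. t \<ge> 1 \<Longrightarrow> distr M (count_space UNIV) (X t) = measure_pmf (pmf_of_set B)"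
begin

definition path_event :: "((nat \<Rightarrow> 'b) \<Rightarrow> bool) \<Rightarrow> 'a set" where
  "path_event P = {\<omega> \<in> space M. P (\<lambda>t. X t \<omega>)}"

lemma measurable_X: "t \<ge> 1 \<Longrightarrow> X t \<in> M \<rightarrow>\<^sub>M count_space UNIV"
  using indep unfolding indep_vars_def by auto

lemma X_preimage_in_events: "t \<ge> 1 \<Longrightarrow> X t -` A \<inter> space M \<in> events"
  by (rule measurable_sets[OF measurable_X]) auto

lemma prob_X_preimage:
  assumes "t \<ge> 1"
  shows "prob (X t -` A \<inter> space M) = card (B \<inter> A) / card B"
proof -
  have "prob (X t -` A \<inter> space M) = measure (distr M (count_space UNIV) (X t)) A"
    using measurable_X[OF assms] by (simp add: measure_distr)
  also have "\<dots> = measure_pmf.prob (pmf_of_set B) A"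
    using uniform[OF assms] by simp
  also have "\<dots> = card (B \<inter> A) / card B"
    using finite_bins bins_nonempty by (simp add: measure_pmf_of_set)
  finally show ?thesis .
qed

lemma X_outside_bins_null: "t \<ge> 1 \<Longrightarrow> X t -` (- B) \<inter> space M \<in> null_sets M"
  using prob_X_preimage[of t "- B"] X_preimage_in_events[of t "- B"]
  by (simp add: null_sets_def emeasure_eq_measure)

lemma path_event_in_sigma:
  assumes S: "sigma_algebra (space M) S" and J: "finite J"
    and gen: "\<And>s a. s \<in> J \<Longrightarrow> X s -` {a} \<inter> space M \<in> S"
    and P: "determined_by J P"
  shows "path_event P \<in> S"
proof -
  interpret S: sigma_algebra "space M" S
    by (rule S)
  have cylinder: "path_event (\<lambda>x. \<forall>s\<in>J. x s = u s) \<in> S" for u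
  proof (cases "J = {}")
    case True
    then show ?thesis
      by (simp add: path_event_def)
  next
    case False
    then have "path_event (\<lambda>x. \<forall>s\<in>J. x s = u s) = (\<Inter>s\<in>J. X s -` {u s} \<inter> space M)"
      by (auto simp: path_event_def)
    also have "\<dots> \<in> S"
      using False J gen by (intro S.finite_INT) auto
    finally show ?thesis .
  qed
  have decomp: "path_event P = (\<Union>u\<in>{u \<in> J \<rightarrow>\<^sub>E UNIV. P u}. path_event (\<lambda>x. \<forall>s\<in>J. x s = u s))"
  proof (intro equalityI subsetI)
    fix \<omega> assume \<omega>: "\<omega> \<in> path_event P"
    let ?u = "restrict (\<lambda>t. X t \<omega>) J"
    have "?u \<in> {u \<in> J \<rightarrow>\<^sub>E UNIV. P u}"
      using \<omega> determined_byD[OF P, of "\<lambda>t. X t \<omega>" ?u] by (simp add: path_event_def)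
    moreover have "\<omega> \<in> path_event (\<lambda>x. \<forall>s\<in>J. x s = ?u s)"
      using \<omega> by (simp add: path_event_def)
    ultimately show "\<omega> \<in> (\<Union>u\<in>{u \<in> J \<rightarrow>\<^sub>E UNIV. P u}. path_event (\<lambda>x. \<forall>s\<in>J. x s = u s))"
      by blast
  next
    fix \<omega> assume "\<omega> \<in> (\<Union>u\<in>{u \<in> J \<rightarrow>\<^sub>E UNIV. P u}. path_event (\<lambda>x. \<forall>s\<in>J. x s = u s))"
    then obtain u where "P u" "\<omega> \<in> path_event (\<lambda>x. \<forall>s\<in>J. x s = u s)"
      by blast
    then show "\<omega> \<in> path_event P"
      using determined_byD[OF P, of u "\<lambda>t. X t \<omega>"] by (simp add: path_event_def)
  qed
  have "countable (J \<rightarrow>\<^sub>E (UNIV :: 'b set))"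
    using J by (simp add: countable_PiE)
  then have "countable {u \<in> J \<rightarrow>\<^sub>E (UNIV :: 'b set). P u}"
    by (rule countable_subset[rotated]) auto
  then show ?thesis
    unfolding decomp using cylinder by (intro S.countable_UN') auto
qed

lemma path_event_in_events:
  "finite J \<Longrightarrow> J \<subseteq> {1..} \<Longrightarrow> determined_by J P \<Longrightarrow> path_event P \<in> events"
  by (rule path_event_in_sigma[OF sets.sigma_algebra_axioms]) (auto intro!: X_preimage_in_events)

lemma cylinder_in_events:
  "finite J \<Longrightarrow> J \<subseteq> {1..} \<Longrightarrow> path_event (\<lambda>x. \<forall>s\<in>J. x s = u s) \<in> events"
  by (rule path_event_in_events) (auto simp: determined_by_def)

lemma prob_cylinder:
  assumes J: "finite J" "J \<subseteq> {1..}" and u: "\<And>s. s \<in> J \<Longrightarrow> u s \<in> B"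
  shows "prob (path_event (\<lambda>x. \<forall>s\<in>J. x s = u s)) = (1 / card B) ^ card J"
proof (cases "J = {}")
  case True
  then show ?thesis
    by (simp add: path_event_def prob_space)
next
  case False
  have "indep_sets (\<lambda>s. sigma_sets (space M) {X s -` A \<inter> space M | A. A \<in> sets (count_space UNIV)}) {1..}"
    using indep unfolding indep_vars_def by auto
  then have "prob (\<Inter>s\<in>J. X s -` {u s} \<inter> space M) = (\<Prod>s\<in>J. prob (X s -` {u s} \<inter> space M))"
    by (rule indep_setsD) (use False J in \<open>auto intro!: sigma_sets.Basic\<close>)
  also have "\<dots> = (\<Prod>s\<in>J. 1 / card B)"
    using J u by (intro prod.cong) (auto simp: prob_X_preimage)
  also have "(\<Inter>s\<in>J. X s -` {u s} \<inter> space M) = path_event (\<lambda>x. \<forall>s\<in>J. x s = u s)"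
    using False by (auto simp: path_event_def)
  finally show ?thesis
    by simp
qed

lemma prob_sum_cylinders:
  assumes J: "finite J" "J \<subseteq> {1..}" and E: "E \<in> events"
  shows "prob E = (\<Sum>u\<in>J \<rightarrow>\<^sub>E B. prob (E \<inter> path_event (\<lambda>x. \<forall>s\<in>J. x s = u s)))"
proof -
  let ?C = "\<lambda>u. path_event (\<lambda>x. \<forall>s\<in>J. x s = u s)"
  define outside where "outside = (\<Union>s\<in>J. X s -` (- B) \<inter> space M)"
  have outside_null: "outside \<in> null_sets M"
    unfolding outside_def using J by (intro null_sets.finite_UN X_outside_bins_null) auto
  have decomp: "E - outside = (\<Union>u\<in>J \<rightarrow>\<^sub>E B. E \<inter> ?C u)"
  proof safe
    fix \<omega> assume \<omega>: "\<omega> \<in> E" "\<omega> \<notin> outside"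
    then have "\<omega> \<in> space M"
      using E sets.sets_into_space by auto
    then have "restrict (\<lambda>t. X t \<omega>) J \<in> J \<rightarrow>\<^sub>E B" "\<omega> \<in> ?C (restrict (\<lambda>t. X t \<omega>) J)"
      using \<omega> by (auto simp: outside_def path_event_def)
    then show "\<omega> \<in> (\<Union>u\<in>J \<rightarrow>\<^sub>E B. E \<inter> ?C u)"
      using \<omega> by blast
  next
    fix \<omega> u assume "u \<in> J \<rightarrow>\<^sub>E B" "\<omega> \<in> ?C u" "\<omega> \<in> outside"
    then show False
      by (auto simp: outside_def path_event_def)
  qed
  have disjoint: "disjoint_family_on (\<lambda>u. E \<inter> ?C u) (J \<rightarrow>\<^sub>E B)"
    unfolding disjoint_family_on_def
  proof (intro ballI impI)
    fix u v assume uv: "u \<in> J \<rightarrow>\<^sub>E B" "v \<in> J \<rightarrow>\<^sub>E B" "u \<noteq> v"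
    have "\<exists>s\<in>J. u s \<noteq> v s"
    proof (rule ccontr)
      assume "\<not> (\<exists>s\<in>J. u s \<noteq> v s)"
      then have "u = v"
        using uv(1,2) by (intro PiE_ext) auto
      with uv(3) show False
        by simp
    qed
    then show "E \<inter> ?C u \<inter> (E \<inter> ?C v) = {}"
      by (auto simp: path_event_def)
  qed
  have "prob (E - outside) = (\<Sum>u\<in>J \<rightarrow>\<^sub>E B. prob (E \<inter> ?C u))"
    unfolding decomp using J E cylinder_in_events finite_bins disjoint
    by (intro finite_measure_finite_Union) (auto intro!: finite_PiE)
  moreover have "prob E = prob (E - outside)"
    using E outside_null by (simp add: measure_Diff_null_set)
  ultimately show ?thesis
    by simp
qed

lemma prob_path_event:
  assumes J: "finite J" "J \<subseteq> {1..}" and P: "determined_by J P"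
  shows "prob (path_event P) = card {u \<in> J \<rightarrow>\<^sub>E B. P u} * (1 / card B) ^ card J"
proof -
  have "prob (path_event P) = (\<Sum>u\<in>J \<rightarrow>\<^sub>E B. prob (path_event P \<inter> path_event (\<lambda>x. \<forall>s\<in>J. x s = u s)))"
    using J P by (intro prob_sum_cylinders path_event_in_events)
  also have "\<dots> = (\<Sum>u\<in>J \<rightarrow>\<^sub>E B. if P u then (1 / card B) ^ card J else 0)"
  proof (rule sum.cong[OF refl])
    fix u assume u: "u \<in> J \<rightarrow>\<^sub>E B"
    have "P (\<lambda>t. X t \<omega>) = P u" if "\<omega> \<in> path_event (\<lambda>x. \<forall>s\<in>J. x s = u s)" for \<omega>
      using that by (intro determined_byD[OF P]) (auto simp: path_event_def)
    then have "path_event P \<inter> path_event (\<lambda>x. \<forall>s\<in>J. x s = u s) =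
               (if P u then path_event (\<lambda>x. \<forall>s\<in>J. x s = u s) else {})"
      by (auto simp: path_event_def)
    then show "prob (path_event P \<inter> path_event (\<lambda>x. \<forall>s\<in>J. x s = u s)) =
               (if P u then (1 / card B) ^ card J else 0)"
      using u J by (simp add: prob_cylinder PiE_iff)
  qed
  also have "\<dots> = card {u \<in> J \<rightarrow>\<^sub>E B. P u} * (1 / card B) ^ card J"
    using J finite_bins by (simp add: sum.inter_filter[symmetric] finite_PiE)
  finally show ?thesis .
qed

section \<open>A conditional Borel--Cantelli argument\<close>

lemma prob_cylinder_extension_le:
  assumes C: "determined_by {1..r} C" and G: "determined_by {1..r + L} G"
    and u: "u \<in> {1..r} \<rightarrow>\<^sub>E B" "C u" and w: "\<forall>q\<in>{1..L}. w q \<in> B"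
    and forces_G: "\<forall>x. (\<forall>s\<in>{1..r}. x s = u s) \<longrightarrow> (\<forall>q\<in>{1..L}. x (r + q) = w q) \<longrightarrow> G x"
  shows "(1 / card B) ^ (r + L) \<le> prob (path_event (\<lambda>x. C x \<and> G x) \<inter> path_event (\<lambda>x. \<forall>s\<in>{1..r}. x s = u s))"
proof -
  let ?cyl = "\<lambda>J u. path_event (\<lambda>x. \<forall>s\<in>J. x s = u s)"
  define v where "v s = (if s \<le> r then u s else w (s - r))" for s
  have v_in: "v s \<in> B" if "s \<in> {1..r + L}" for s
  proof (cases "s \<le> r")
    case True
    then show ?thesis
      using that u(1) by (auto simp: v_def PiE_iff)
  next
    case False
    then have "s - r \<in> {1..L}"
      using that by auto
    then show ?thesis
      using w False by (simp add: v_def)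
  qed
  have "?cyl {1..r + L} v \<subseteq> path_event (\<lambda>x. C x \<and> G x) \<inter> ?cyl {1..r} u"
  proof
    fix \<omega> assume \<omega>: "\<omega> \<in> ?cyl {1..r + L} v"
    then have prefix: "\<forall>s\<in>{1..r}. X s \<omega> = u s"
      by (auto simp: path_event_def v_def)
    have suffix: "\<forall>q\<in>{1..L}. X (r + q) \<omega> = w q"
    proof
      fix q assume "q \<in> {1..L}"
      then have "r + q \<in> {1..r + L}" "\<not> r + q \<le> r"
        by auto
      then show "X (r + q) \<omega> = w q"
        using \<omega> by (auto simp: path_event_def v_def)
    qed
    have "C (\<lambda>t. X t \<omega>)"
      using determined_byD[OF C, of "\<lambda>t. X t \<omega>" u] prefix u(2) by simp
    moreover have "G (\<lambda>t. X t \<omega>)"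
      using forces_G[rule_format, of "\<lambda>t. X t \<omega>"] prefix suffix by simp
    ultimately show "\<omega> \<in> path_event (\<lambda>x. C x \<and> G x) \<inter> ?cyl {1..r} u"
      using \<omega> prefix by (simp add: path_event_def)
  qed
  moreover have "path_event (\<lambda>x. C x \<and> G x) \<in> events"
    by (intro path_event_in_events[of "{1..r + L}"] determined_by_conj G determined_by_mono[OF C]) auto
  ultimately have "prob (?cyl {1..r + L} v) \<le> prob (path_event (\<lambda>x. C x \<and> G x) \<inter> ?cyl {1..r} u)"
    using cylinder_in_events[of "{1..r}" u] by (intro finite_measure_mono) auto
  moreover have "prob (?cyl {1..r + L} v) = (1 / card B) ^ (r + L)"
    using v_in by (subst prob_cylinder) auto
  ultimately show ?thesis
    by simp
qed

lemma prob_extension_lower_bound: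
  assumes C: "determined_by {1..r} C" and G: "determined_by {1..r + L} G"
    and extension: "\<And>u. u \<in> {1..r} \<rightarrow>\<^sub>E B \<Longrightarrow> C u \<Longrightarrow>
       \<exists>w. (\<forall>q\<in>{1..L}. w q \<in> B) \<and>
           (\<forall>x. (\<forall>s\<in>{1..r}. x s = u s) \<longrightarrow> (\<forall>q\<in>{1..L}. x (r + q) = w q) \<longrightarrow> G x)"
  shows "(1 / card B) ^ L * prob (path_event C) \<le> prob (path_event (\<lambda>x. C x \<and> G x))"
proof -
  let ?W = "{1..r} \<rightarrow>\<^sub>E B"
  let ?cyl = "\<lambda>u. path_event (\<lambda>x. \<forall>s\<in>{1..r}. x s = u s)"
  have cylinder_bound: "(if C u then (1 / card B) ^ (r + L) else 0) \<le> prob (path_event (\<lambda>x. C x \<and> G x) \<inter> ?cyl u)"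
    if u: "u \<in> ?W" for u
  proof (cases "C u")
    case True
    with extension[OF u] obtain w where w: "\<forall>q\<in>{1..L}. w q \<in> B"
      "\<forall>x. (\<forall>s\<in>{1..r}. x s = u s) \<longrightarrow> (\<forall>q\<in>{1..L}. x (r + q) = w q) \<longrightarrow> G x"
      by blast
    show ?thesis
      using prob_cylinder_extension_le[OF C G u True w] True by simp
  qed simp
  have "card {u \<in> ?W. C u} * (1 / card B) ^ (r + L) = (\<Sum>u\<in>?W. if C u then (1 / card B) ^ (r + L) else 0)"
    using finite_bins by (simp add: sum.inter_filter[symmetric] finite_PiE)
  also have "\<dots> \<le> (\<Sum>u\<in>?W. prob (path_event (\<lambda>x. C x \<and> G x) \<inter> ?cyl u))"
    by (intro sum_mono cylinder_bound)
  also have "\<dots> = prob (path_event (\<lambda>x. C x \<and> G x))"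
    by (intro prob_sum_cylinders[symmetric] path_event_in_events[of "{1..r + L}"]
        determined_by_conj G determined_by_mono[OF C]) auto
  finally show ?thesis
    using prob_path_event[OF _ _ C] by (simp add: power_add mult.assoc mult.commute)
qed

lemma prob_path_event_not_le:
  assumes "finite J" "J \<subseteq> {1..}" "determined_by J C" "determined_by J G"
    and lower: "p * prob (path_event C) \<le> prob (path_event (\<lambda>x. C x \<and> G x))"
  shows "prob (path_event (\<lambda>x. C x \<and> \<not> G x)) \<le> (1 - p) * prob (path_event C)"
proof -
  have "path_event (\<lambda>x. C x \<and> G x) \<in> events" "path_event (\<lambda>x. C x \<and> \<not> G x) \<in> events"
    using assms by (auto intro!: path_event_in_events[of J] determined_by_conj determined_by_not)
  moreover have "path_event C = path_event (\<lambda>x. C x \<and> G x) \<union> path_event (\<lambda>x. C x \<and> \<not> G x)"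
    by (auto simp: path_event_def)
  moreover have "path_event (\<lambda>x. C x \<and> G x) \<inter> path_event (\<lambda>x. C x \<and> \<not> G x) = {}"
    by (auto simp: path_event_def)
  ultimately have "prob (path_event C) = prob (path_event (\<lambda>x. C x \<and> G x)) + prob (path_event (\<lambda>x. C x \<and> \<not> G x))"
    by (simp add: finite_measure_Union)
  with lower show ?thesis
    by (simp add: algebra_simps)
qed

lemma spaced_hits_miss_in_events:
  assumes H: "\<And>s. determined_by {1..s} (H s)" and G: "\<And>s. determined_by {1..s + L} (G s)"
  shows "path_event (spaced_hits_miss H G L n k) \<in> events"
proof (cases k)
  case 0
  then show ?thesis
    by (simp add: path_event_def spaced_hits_miss_def)
next
  case (Suc k')
  have pieces: "path_event (\<lambda>x. (spaced_hits_miss H G L n k' x \<and> spaced_hit H L n k' x = Some r) \<and> \<not> G r x)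
                \<in> events" for r
    by (rule path_event_in_events[OF _ _ determined_by_spaced_hits_miss_Suc[OF H G]]) auto
  have "path_event (spaced_hits_miss H G L n k) =
        (\<Union>r. path_event (\<lambda>x. (spaced_hits_miss H G L n k' x \<and> spaced_hit H L n k' x = Some r) \<and> \<not> G r x))"
    unfolding Suc by (auto simp: path_event_def spaced_hits_miss_Suc)
  also have "\<dots> \<in> events"
    by (rule sets.countable_UN) (use pieces in auto)
  finally show ?thesis .
qed

text \<open>The \<open>k\<close>-th spaced hit is a stopping time, so conditioning on the history up to it
  multiplies the probability of missing \<open>G\<close> once more by at most \<open>1 - p\<close>.\<close>
lemma prob_spaced_hits_miss_le:
  assumes H: "\<And>s. determined_by {1..s} (H s)" and G: "\<And>s. determined_by {1..s + L} (G s)"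
    and p: "p \<le> 1"
    and step: "\<And>s C. determined_by {1..s} C \<Longrightarrow> (\<And>x. C x \<Longrightarrow> H s x) \<Longrightarrow>
                 p * prob (path_event C) \<le> prob (path_event (\<lambda>x. C x \<and> G s x))"
  shows "prob (path_event (spaced_hits_miss H G L n k)) \<le> (1 - p) ^ k"
proof (induction k)
  case 0
  then show ?case
    by (simp add: path_event_def spaced_hits_miss_def prob_space)
next
  case (Suc k)
  define C where "C r x \<longleftrightarrow> spaced_hits_miss H G L n k x \<and> spaced_hit H L n k x = Some r" for r x
  have C: "determined_by {1..r} (C r)" for r
    unfolding C_def by (rule determined_by_spaced_hits_miss[OF H G])
  have C_events: "path_event (C r) \<in> events" for r
    by (rule path_event_in_events[OF _ _ C]) auto
  have CG_events: "path_event (\<lambda>x. C r x \<and> \<not> G r x) \<in> events" for r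
    using determined_by_spaced_hits_miss_Suc[OF H G] unfolding C_def
    by (intro path_event_in_events[of "{1..r + L}"]) auto
  have "p * prob (path_event (C r)) \<le> prob (path_event (\<lambda>x. C r x \<and> G r x))" for r
    using C by (rule step) (auto simp: C_def dest: spaced_hit_SomeD)
  then have miss_once: "prob (path_event (\<lambda>x. C r x \<and> \<not> G r x)) \<le> (1 - p) * prob (path_event (C r))" for r
    using G[of r] determined_by_mono[OF C, of r "{1..r + L}"] by (intro prob_path_event_not_le[of "{1..r + L}"]) auto
  have disjoint: "disjoint_family (\<lambda>r. path_event (C r))"
    unfolding disjoint_family_on_def by (auto simp: path_event_def C_def)
  then have disjoint': "disjoint_family (\<lambda>r. path_event (\<lambda>x. C r x \<and> \<not> G r x))"
    unfolding disjoint_family_on_def by (auto simp: path_event_def)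
  have sums_miss: "(\<lambda>r. prob (path_event (\<lambda>x. C r x \<and> \<not> G r x))) sums prob (\<Union>r. path_event (\<lambda>x. C r x \<and> \<not> G r x))"
    using CG_events disjoint' by (intro finite_measure_UNION) auto
  have sums_C: "(\<lambda>r. prob (path_event (C r))) sums prob (\<Union>r. path_event (C r))"
    using C_events disjoint by (intro finite_measure_UNION) auto
  have "prob (path_event (spaced_hits_miss H G L n (Suc k))) = prob (\<Union>r. path_event (\<lambda>x. C r x \<and> \<not> G r x))"
    by (rule arg_cong[where f = prob]) (auto simp: path_event_def spaced_hits_miss_Suc C_def)
  also have "\<dots> \<le> (1 - p) * prob (\<Union>r. path_event (C r))"
    by (rule sums_le[OF _ sums_miss sums_mult[OF sums_C]]) (rule miss_once)
  also have "\<dots> \<le> (1 - p) * prob (path_event (spaced_hits_miss H G L n k))"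
    using p spaced_hits_miss_in_events[OF H G]
    by (intro mult_left_mono finite_measure_mono) (auto simp: path_event_def C_def)
  also have "\<dots> \<le> (1 - p) * (1 - p) ^ k"
    using Suc.IH p by (intro mult_left_mono) auto
  finally show ?case
    by simp
qed

lemma spaced_hits_always_miss_null:
  assumes H: "\<And>s. determined_by {1..s} (H s)" and G: "\<And>s. determined_by {1..s + L} (G s)"
    and p: "0 < p" "p \<le> 1"
    and step: "\<And>s C. determined_by {1..s} C \<Longrightarrow> (\<And>x. C x \<Longrightarrow> H s x) \<Longrightarrow>
                 p * prob (path_event C) \<le> prob (path_event (\<lambda>x. C x \<and> G s x))"
  shows "(\<Inter>k. path_event (spaced_hits_miss H G L n k)) \<in> null_sets M"
proof -
  let ?I = "\<Inter>k. path_event (spaced_hits_miss H G L n k)"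
  have bound: "prob ?I \<le> (1 - p) ^ k" for k
  proof -
    have "prob ?I \<le> prob (path_event (spaced_hits_miss H G L n k))"
      by (rule finite_measure_mono[OF _ spaced_hits_miss_in_events[OF H G]]) (rule INT_lower, rule UNIV_I)
    also have "\<dots> \<le> (1 - p) ^ k"
      by (rule prob_spaced_hits_miss_le[OF H G p(2) step])
    finally show ?thesis .
  qed
  have "(\<lambda>k. (1 - p) ^ k) \<longlonglongrightarrow> 0"
    using p by (intro LIMSEQ_power_zero) auto
  then have "prob ?I \<le> 0"
    by (rule LIMSEQ_le_const) (intro exI[of _ 0] allI impI bound)
  then have "prob ?I = 0"
    using measure_nonneg[of M ?I] by linarith
  moreover have "?I \<in> events"
    using spaced_hits_miss_in_events[OF H G] by (intro sets.countable_INT) auto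
  ultimately show ?thesis
    by (intro null_setsI) (simp_all add: emeasure_eq_measure)
qed

lemma AE_INFM_imp_INFM:
  assumes H: "\<And>s. determined_by {1..s} (H s)" and G: "\<And>s. determined_by {1..s + L} (G s)"
    and p: "0 < p" "p \<le> 1"
    and step: "\<And>s C. determined_by {1..s} C \<Longrightarrow> (\<And>x. C x \<Longrightarrow> H s x) \<Longrightarrow>
                 p * prob (path_event C) \<le> prob (path_event (\<lambda>x. C x \<and> G s x))"
  shows "AE \<omega> in M. (\<exists>\<^sub>\<infinity>s. H s (\<lambda>t. X t \<omega>)) \<longrightarrow> (\<exists>\<^sub>\<infinity>s. G s (\<lambda>t. X t \<omega>))"
proof -
  have "AE \<omega> in M. \<forall>n. \<omega> \<notin> (\<Inter>k. path_event (spaced_hits_miss H G L n k))"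
    unfolding AE_all_countable
    by (intro allI AE_not_in spaced_hits_always_miss_null[OF H G p]) (fact step)
  then show ?thesis
  proof (rule AE_mp, intro AE_I2 impI)
    fix \<omega> assume "\<omega> \<in> space M" and \<omega>: "\<forall>n. \<omega> \<notin> (\<Inter>k. path_event (spaced_hits_miss H G L n k))"
      and H_often: "\<exists>\<^sub>\<infinity>s. H s (\<lambda>t. X t \<omega>)"
    show "\<exists>\<^sub>\<infinity>s. G s (\<lambda>t. X t \<omega>)"
      unfolding INFM_nat_le
    proof (rule allI, rule ccontr)
      fix n assume "\<not> (\<exists>s\<ge>n. G s (\<lambda>t. X t \<omega>))"
      then have "\<forall>s\<ge>n. \<not> G s (\<lambda>t. X t \<omega>)"
        by simp
      with H_often have "spaced_hits_miss H G L n k (\<lambda>t. X t \<omega>)" for k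
        by (rule spaced_hits_miss_if_never_G)
      then have "\<omega> \<in> (\<Inter>k. path_event (spaced_hits_miss H G L n k))"
        using \<open>\<omega> \<in> space M\<close> by (simp add: path_event_def)
      with \<omega> show False
        by blast
    qed
  qed
qed

lemma AE_catch_up_within:
  assumes "i \<in> B" "j \<in> B"
  shows "AE \<omega> in M. (\<exists>\<^sub>\<infinity>t. within_lead B m i (\<lambda>t. X t \<omega>) t \<and> within_lead B m j (\<lambda>t. X t \<omega>) t)
           \<longrightarrow> (\<exists>\<^sub>\<infinity>t. leads B i (\<lambda>t. X t \<omega>) t \<and> leads B j (\<lambda>t. X t \<omega>) t)"
proof -
  define H where "H s x \<longleftrightarrow> within_lead B m i x s \<and> within_lead B m j x s" for s x
  define G where "G s x \<longleftrightarrow> (\<exists>t\<in>{s..s + 2*m}. leads B i x t \<and> leads B j x t)" for s x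
  have H_det: "determined_by {1..s} (H s)" for s
    unfolding H_def by (intro determined_by_conj determined_by_within_lead)
  have G_det: "determined_by {1..s + 2*m} (G s)" for s
    unfolding G_def by (intro determined_by_Bex_atLeastAtMost determined_by_conj determined_by_leads)
  have step: "(1 / card B) ^ (2*m) * prob (path_event C) \<le> prob (path_event (\<lambda>x. C x \<and> G s x))"
    if C: "determined_by {1..s} C" and CH: "\<And>x. C x \<Longrightarrow> H s x" for s C
    using C G_det
  proof (rule prob_extension_lower_bound)
    fix u assume "C u"
    then have "within_lead B m i u s" "within_lead B m j u s"
      using CH unfolding H_def by auto
    then show "\<exists>w. (\<forall>q\<in>{1..2*m}. w q \<in> B) \<and>
        (\<forall>x. (\<forall>r\<in>{1..s}. x r = u r) \<longrightarrow> (\<forall>q\<in>{1..2*m}. x (s + q) = w q) \<longrightarrow> G s x)"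
      unfolding G_def by (rule catch_up_continuation[OF finite_bins assms])
  qed
  have "card B \<ge> 1"
    using finite_bins bins_nonempty by (simp add: Suc_le_eq card_gt_0_iff)
  then have p_pos: "0 < (1 / card B :: real) ^ (2*m)" and p_le: "(1 / card B :: real) ^ (2*m) \<le> 1"
    by (auto intro!: power_le_one)
  have "AE \<omega> in M. (\<exists>\<^sub>\<infinity>s. H s (\<lambda>t. X t \<omega>)) \<longrightarrow> (\<exists>\<^sub>\<infinity>s. G s (\<lambda>t. X t \<omega>))"
    by (rule AE_INFM_imp_INFM[OF H_det G_det p_pos p_le]) (fact step)
  then show ?thesis
  proof (rule eventually_mono, intro impI)
    fix \<omega> assume "(\<exists>\<^sub>\<infinity>s. H s (\<lambda>t. X t \<omega>)) \<longrightarrow> (\<exists>\<^sub>\<infinity>s. G s (\<lambda>t. X t \<omega>))"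
      and "\<exists>\<^sub>\<infinity>t. within_lead B m i (\<lambda>t. X t \<omega>) t \<and> within_lead B m j (\<lambda>t. X t \<omega>) t"
    then have "\<exists>\<^sub>\<infinity>s. \<exists>t\<in>{s..s + 2*m}. leads B i (\<lambda>t. X t \<omega>) t \<and> leads B j (\<lambda>t. X t \<omega>) t"
      unfolding H_def G_def by simp
    then show "\<exists>\<^sub>\<infinity>t. leads B i (\<lambda>t. X t \<omega>) t \<and> leads B j (\<lambda>t. X t \<omega>) t"
      by (rule INFM_window)
  qed
qed

lemma AE_catch_up:
  assumes "i \<in> B" "j \<in> B"
  shows "AE \<omega> in M. recurrently_near_lead B i j (\<lambda>t. X t \<omega>)
           \<longrightarrow> (\<exists>\<^sub>\<infinity>t. leads B i (\<lambda>t. X t \<omega>) t \<and> leads B j (\<lambda>t. X t \<omega>) t)"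
proof -
  have "AE \<omega> in M. \<forall>m. (\<exists>\<^sub>\<infinity>t. within_lead B m i (\<lambda>t. X t \<omega>) t \<and> within_lead B m j (\<lambda>t. X t \<omega>) t)
          \<longrightarrow> (\<exists>\<^sub>\<infinity>t. leads B i (\<lambda>t. X t \<omega>) t \<and> leads B j (\<lambda>t. X t \<omega>) t)"
    unfolding AE_all_countable by (intro allI AE_catch_up_within assms)
  then show ?thesis
    by (rule eventually_mono) (auto simp: recurrently_near_lead_def)
qed

section \<open>Zero--one law and exchangeability of the bins\<close>

lemma path_event_INFM_in_events:
  "(\<And>t. determined_by {1..t} (Q t)) \<Longrightarrow> path_event (\<lambda>x. \<exists>\<^sub>\<infinity>t. Q t x) \<in> events"
proof -
  assume Q: "\<And>t. determined_by {1..t} (Q t)"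
  have "path_event (\<lambda>x. \<exists>\<^sub>\<infinity>t. Q t x) = (\<Inter>a. \<Union>t\<in>{a..}. path_event (Q t))"
    by (auto simp: path_event_def INFM_nat_le)
  also have "\<dots> \<in> events"
    using path_event_in_events[OF _ _ Q] by auto
  finally show ?thesis .
qed

definition sigma_X :: "nat \<Rightarrow> 'a set set" where
  "sigma_X t = sigma_sets (space M) {X t -` A \<inter> space M | A. A \<in> sets (count_space UNIV)}"

lemma indep_sigma_X_Suc: "indep_sets (\<lambda>k. sigma_X (Suc k)) UNIV"
proof (rule indep_setsI)
  have indep_sets: "indep_sets sigma_X {1..}"
    using indep unfolding indep_vars_def sigma_X_def by auto
  then show "sigma_X (Suc k) \<subseteq> events" for k
    unfolding indep_sets_def by auto
  fix A :: "nat \<Rightarrow> 'a set" and J :: "nat set"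
  assume J: "J \<noteq> {}" "finite J" and A: "\<forall>j\<in>J. A j \<in> sigma_X (Suc j)"
  have "prob (\<Inter>s\<in>Suc ` J. A (s - 1)) = (\<Prod>s\<in>Suc ` J. prob (A (s - 1)))"
    by (rule indep_setsD[OF indep_sets]) (use J A in auto)
  then show "prob (\<Inter>j\<in>J. A j) = (\<Prod>j\<in>J. prob (A j))"
    by (simp add: prod.reindex)
qed

lemma prob_recurrently_near_lead_0_1:
  "prob (path_event (recurrently_near_lead B i j)) = 0 \<or> prob (path_event (recurrently_near_lead B i j)) = 1"
proof (rule kolmogorov_0_1_law[OF _ indep_sigma_X_Suc])
  show "sigma_algebra (space M) (sigma_X (Suc k))" for k
    unfolding sigma_X_def by (rule sigma_algebra_sigma_sets) auto
  have "path_event (recurrently_near_lead B i j) \<in> sigma_sets (space M) (\<Union>k\<in>{n..}. sigma_X (Suc k))" for n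
  proof -
    let ?S = "sigma_sets (space M) (\<Union>k\<in>{n..}. sigma_X (Suc k))"
    have "sigma_X s \<subseteq> Pow (space M)" for s
      unfolding sigma_X_def by (intro subsetI PowI sigma_sets_into_sp[of _ "space M"]) auto
    then interpret S: sigma_algebra "space M" ?S
      by (intro sigma_algebra_sigma_sets) auto
    have generators: "X s -` {a} \<inter> space M \<in> ?S" if "s \<in> {n<..t}" for s t a
    proof -
      have "X s -` {a} \<inter> space M \<in> sigma_X (Suc (s - 1))"
        using that unfolding sigma_X_def by (intro sigma_sets.Basic) auto
      moreover have "s - 1 \<in> {n..}"
        using that by auto
      ultimately show ?thesis
        by (intro sigma_sets.Basic UN_I)
    qed
    let ?Q = "\<lambda>m t x. within_lead_after n B m i x t \<and> within_lead_after n B m j x t"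
    have pieces: "path_event (?Q m t) \<in> ?S" for m t
      by (rule path_event_in_sigma[OF S.sigma_algebra_axioms, of "{n<..t}"])
        (auto intro: generators determined_by_conj determined_by_within_lead_after)
    have "path_event (recurrently_near_lead B i j) = (\<Union>m. \<Inter>a. \<Union>t\<in>{a..}. path_event (?Q m t))"
      unfolding recurrently_near_lead_iff_after[of _ _ _ _ n]
      by (auto simp: path_event_def INFM_nat_le Bex_def atLeast_iff; blast)
    also have "\<dots> \<in> ?S"
      using pieces by (intro S.countable_UN S.countable_INT) auto
    finally show ?thesis .
  qed
  then show "path_event (recurrently_near_lead B i j) \<in> tail_events (\<lambda>k. sigma_X (Suc k))"
    by (simp add: tail_events_def)
qed

lemma AE_leads_together_of_pos:
  assumes "i \<in> B" "j \<in> B" and pos: "prob (path_event (\<lambda>x. \<exists>\<^sub>\<infinity>t. leads B i x t \<and> leads B j x t)) > 0"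
  shows "AE \<omega> in M. \<exists>\<^sub>\<infinity>t. leads B i (\<lambda>t. X t \<omega>) t \<and> leads B j (\<lambda>t. X t \<omega>) t"
proof -
  let ?V = "path_event (recurrently_near_lead B i j)"
  have "?V = (\<Union>m. path_event (\<lambda>x. \<exists>\<^sub>\<infinity>t. within_lead B m i x t \<and> within_lead B m j x t))"
    by (auto simp: path_event_def recurrently_near_lead_def)
  also have "\<dots> \<in> events"
    using path_event_INFM_in_events[OF determined_by_conj[OF determined_by_within_lead determined_by_within_lead]]
    by auto
  finally have V_event: "?V \<in> events" .
  have "path_event (\<lambda>x. \<exists>\<^sub>\<infinity>t. leads B i x t \<and> leads B j x t) \<subseteq> ?V"
    unfolding recurrently_near_lead_def path_event_def
    by (auto intro: INFM_mono leads_imp_within_lead)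
  then have "prob (path_event (\<lambda>x. \<exists>\<^sub>\<infinity>t. leads B i x t \<and> leads B j x t)) \<le> prob ?V"
    using V_event by (rule finite_measure_mono)
  then have "prob ?V \<noteq> 0"
    using pos by simp
  then have "prob ?V = 1"
    using prob_recurrently_near_lead_0_1[of i j] by simp
  then have "AE \<omega> in M. \<omega> \<in> ?V"
    by (rule AE_prob_1)
  with AE_catch_up[OF assms(1,2)] show ?thesis
    by eventually_elim (simp add: path_event_def)
qed

lemma prob_path_event_INFM_eq_lim:
  assumes Q: "\<And>t. determined_by {1..t} (Q t)"
  shows "prob (path_event (\<lambda>x. \<exists>\<^sub>\<infinity>t. Q t x)) =
         lim (\<lambda>n. lim (\<lambda>T. card {u \<in> {1..T} \<rightarrow>\<^sub>E B. \<exists>t\<in>{n..T}. Q t u} * (1 / card B) ^ T))"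
proof -
  define A where "A n T = path_event (\<lambda>x. \<exists>t\<in>{n..T}. Q t x)" for n T
  define A_infty where "A_infty n = path_event (\<lambda>x. \<exists>t\<ge>n. Q t x)" for n
  have A_det: "determined_by {1..T} (\<lambda>x. \<exists>t\<in>{n..T}. Q t x)" for n T
    by (rule determined_by_Bex_atLeastAtMost[OF Q])
  have A_events: "A n T \<in> events" for n T
    unfolding A_def by (rule path_event_in_events[OF _ _ A_det]) auto
  have prob_A: "prob (A n T) = card {u \<in> {1..T} \<rightarrow>\<^sub>E B. \<exists>t\<in>{n..T}. Q t u} * (1 / card B) ^ T" for n T
    unfolding A_def using prob_path_event[OF _ _ A_det] by simp
  have A_union: "(\<Union>T. A n T) = A_infty n" for n
    unfolding A_def A_infty_def path_event_def by force
  have "(\<lambda>T. prob (A n T)) \<longlonglongrightarrow> prob (A_infty n)" for n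
    unfolding A_union[symmetric] using A_events
    by (intro finite_Lim_measure_incseq) (auto simp: incseq_def A_def path_event_def)
  then have lim_A: "lim (\<lambda>T. prob (A n T)) = prob (A_infty n)" for n
    by (rule limI)
  have "A_infty n \<in> events" for n
    unfolding A_union[symmetric] using A_events by auto
  moreover have "decseq A_infty"
  proof (rule decseq_SucI)
    show "A_infty (Suc n) \<subseteq> A_infty n" for n
      unfolding A_infty_def path_event_def by (blast dest: Suc_leD)
  qed
  ultimately have "(\<lambda>n. prob (A_infty n)) \<longlonglongrightarrow> prob (\<Inter>n. A_infty n)"
    by (intro finite_Lim_measure_decseq) auto
  moreover have "(\<Inter>n. A_infty n) = path_event (\<lambda>x. \<exists>\<^sub>\<infinity>t. Q t x)"
    unfolding A_infty_def path_event_def INFM_nat_le by blast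
  ultimately show ?thesis
    using lim_A by (simp add: prob_A limI)
qed

text \<open>Relabelling the bins by a permutation of \<open>B\<close> gives again an i.i.d. uniform process, and the
  probability of a recurrence event depends only on \<open>B\<close> (by the formula above).\<close>
lemma prob_INFM_comp_permutes:
  assumes \<sigma>: "\<sigma> permutes B" and Q: "\<And>t. determined_by {1..t} (Q t)"
  shows "prob (path_event (\<lambda>x. \<exists>\<^sub>\<infinity>t. Q t (\<sigma> \<circ> x))) = prob (path_event (\<lambda>x. \<exists>\<^sub>\<infinity>t. Q t x))"
proof -
  interpret relabelled: iid_uniform_process M "\<lambda>t \<omega>. \<sigma> (X t \<omega>)" B
  proof
    show "finite B" "B \<noteq> {}"
      by (fact finite_bins bins_nonempty)+
    show "indep_vars (\<lambda>_. count_space UNIV) (\<lambda>t \<omega>. \<sigma> (X t \<omega>)) {1..}"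
      by (rule indep_vars_compose2[OF indep]) simp
    fix t :: nat assume t: "1 \<le> t"
    have "distr M (count_space UNIV) (\<lambda>\<omega>. \<sigma> (X t \<omega>)) = distr (distr M (count_space UNIV) (X t)) (count_space UNIV) \<sigma>"
      using measurable_X[OF t] by (subst distr_distr) (auto simp: comp_def)
    also have "\<dots> = measure_pmf (map_pmf \<sigma> (pmf_of_set B))"
      using uniform[OF t] by (simp add: map_pmf_rep_eq)
    also have "map_pmf \<sigma> (pmf_of_set B) = pmf_of_set B"
      using permutes_inj_on[OF \<sigma>] permutes_image[OF \<sigma>] finite_bins bins_nonempty
      by (simp add: map_pmf_of_set_inj)
    finally show "distr M (count_space UNIV) (\<lambda>\<omega>. \<sigma> (X t \<omega>)) = measure_pmf (pmf_of_set B)" .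
  qed
  have "path_event (\<lambda>x. \<exists>\<^sub>\<infinity>t. Q t (\<sigma> \<circ> x)) = relabelled.path_event (\<lambda>x. \<exists>\<^sub>\<infinity>t. Q t x)"
    by (simp add: path_event_def relabelled.path_event_def comp_def)
  then show ?thesis
    using prob_path_event_INFM_eq_lim[OF Q] relabelled.prob_path_event_INFM_eq_lim[OF Q] by simp
qed

lemma prob_leads_together_permutes:
  assumes "\<sigma> permutes B"
  shows "prob (path_event (\<lambda>x. \<exists>\<^sub>\<infinity>t. leads B (\<sigma> i) x t \<and> leads B (\<sigma> j) x t)) =
         prob (path_event (\<lambda>x. \<exists>\<^sub>\<infinity>t. leads B i x t \<and> leads B j x t))"
proof -
  have "prob (path_event (\<lambda>x. \<exists>\<^sub>\<infinity>t. leads B (\<sigma> i) x t \<and> leads B (\<sigma> j) x t)) =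
        prob (path_event (\<lambda>x. \<exists>\<^sub>\<infinity>t. leads B (\<sigma> i) (\<sigma> \<circ> x) t \<and> leads B (\<sigma> j) (\<sigma> \<circ> x) t))"
    by (rule prob_INFM_comp_permutes[OF assms, symmetric])
      (intro determined_by_conj determined_by_leads)
  also have "\<dots> = prob (path_event (\<lambda>x. \<exists>\<^sub>\<infinity>t. leads B i x t \<and> leads B j x t))"
    by (simp add: leads_comp_permutes[OF assms])
  finally show ?thesis .
qed

lemma AE_every_bin_leads_infinitely_often:
  "AE \<omega> in M. \<forall>i\<in>B. \<exists>\<^sub>\<infinity>t. leads B i (\<lambda>t. X t \<omega>) t"
proof -
  let ?E = "\<lambda>k. path_event (\<lambda>x. \<exists>\<^sub>\<infinity>t. leads B k x t \<and> leads B k x t)"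
  have some_bin: "AE \<omega> in M. \<exists>k\<in>B. \<omega> \<in> ?E k"
  proof (rule AE_I2)
    fix \<omega> assume "\<omega> \<in> space M"
    then show "\<exists>k\<in>B. \<omega> \<in> ?E k"
      using some_bin_leads_infinitely_often[OF finite_bins bins_nonempty, of "\<lambda>t. X t \<omega>"]
      by (simp add: path_event_def)
  qed
  have events: "?E k \<in> events" for k
    by (intro path_event_INFM_in_events determined_by_conj determined_by_leads)
  obtain k where k: "k \<in> B" "prob (?E k) > 0"
    using ex_prob_pos_of_AE_bex[OF finite_bins events some_bin] by blast
  have "AE \<omega> in M. \<exists>\<^sub>\<infinity>t. leads B i (\<lambda>t. X t \<omega>) t" if i: "i \<in> B" for i
  proof -
    have "Transposition.transpose i k permutes B"
      using i k(1) by (rule permutes_swap_id)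
    then have "prob (?E (Transposition.transpose i k i)) = prob (?E i)"
      by (rule prob_leads_together_permutes)
    then have "prob (?E i) > 0"
      using k(2) by simp
    then have "AE \<omega> in M. \<exists>\<^sub>\<infinity>t. leads B i (\<lambda>t. X t \<omega>) t \<and> leads B i (\<lambda>t. X t \<omega>) t"
      by (rule AE_leads_together_of_pos[OF i i])
    then show ?thesis
      by (rule eventually_mono) simp
  qed
  then show ?thesis
    by (rule AE_finite_allI[OF finite_bins])
qed

lemma ex_distinct_pair_leads_together_pos:
  assumes "i \<in> B" "j \<in> B" "i \<noteq> j"
  shows "\<exists>p\<in>{p \<in> B \<times> B. fst p \<noteq> snd p}.
           prob (path_event (\<lambda>x. \<exists>\<^sub>\<infinity>t. leads B (fst p) x t \<and> leads B (snd p) x t)) > 0"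
proof (rule ex_prob_pos_of_AE_bex)
  show "finite {p \<in> B \<times> B. fst p \<noteq> snd p}"
    using finite_bins by simp
  show "path_event (\<lambda>x. \<exists>\<^sub>\<infinity>t. leads B (fst p) x t \<and> leads B (snd p) x t) \<in> events" for p
    by (intro path_event_INFM_in_events determined_by_conj determined_by_leads)
  show "AE \<omega> in M. \<exists>p\<in>{p \<in> B \<times> B. fst p \<noteq> snd p}.
          \<omega> \<in> path_event (\<lambda>x. \<exists>\<^sub>\<infinity>t. leads B (fst p) x t \<and> leads B (snd p) x t)"
    using AE_every_bin_leads_infinitely_often
  proof (rule AE_mp, intro AE_I2 impI)
    fix \<omega> assume "\<omega> \<in> space M" and "\<forall>i\<in>B. \<exists>\<^sub>\<infinity>t. leads B i (\<lambda>t. X t \<omega>) t"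
    then obtain k l where "k \<in> B" "l \<in> B" "k \<noteq> l" "\<exists>\<^sub>\<infinity>t. leads B k (\<lambda>t. X t \<omega>) t \<and> leads B l (\<lambda>t. X t \<omega>) t"
      using two_bins_lead_infinitely_often[OF finite_bins assms] by blast
    with \<open>\<omega> \<in> space M\<close> show "\<exists>p\<in>{p \<in> B \<times> B. fst p \<noteq> snd p}.
        \<omega> \<in> path_event (\<lambda>x. \<exists>\<^sub>\<infinity>t. leads B (fst p) x t \<and> leads B (snd p) x t)"
      by (intro bexI[of _ "(k, l)"]) (simp_all add: path_event_def)
  qed
qed

lemma AE_every_pair_leads_together_infinitely_often:
  "AE \<omega> in M. \<forall>i\<in>B. \<forall>j\<in>B. \<exists>\<^sub>\<infinity>t. leads B i (\<lambda>t. X t \<omega>) t \<and> leads B j (\<lambda>t. X t \<omega>) t"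
proof -
  have "AE \<omega> in M. \<exists>\<^sub>\<infinity>t. leads B i (\<lambda>t. X t \<omega>) t \<and> leads B j (\<lambda>t. X t \<omega>) t"
    if ij: "i \<in> B" "j \<in> B" for i j
  proof (cases "i = j")
    case True
    from AE_every_bin_leads_infinitely_often show ?thesis
      by (rule eventually_mono) (simp add: True \<open>j \<in> B\<close>)
  next
    case False
    then obtain k l where kl: "k \<in> B" "l \<in> B" "k \<noteq> l"
      and pos: "prob (path_event (\<lambda>x. \<exists>\<^sub>\<infinity>t. leads B k x t \<and> leads B l x t)) > 0"
      using ex_distinct_pair_leads_together_pos[OF ij] by auto
    obtain \<sigma> where "\<sigma> permutes B" "\<sigma> i = k" "\<sigma> j = l"
      using exists_permutes_pair[OF ij False kl] by blast
    then have "prob (path_event (\<lambda>x. \<exists>\<^sub>\<infinity>t. leads B i x t \<and> leads B j x t)) > 0"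
      using prob_leads_together_permutes[of \<sigma> i j] pos by simp
    then show ?thesis
      by (rule AE_leads_together_of_pos[OF ij])
  qed
  then show ?thesis
    using finite_bins by (intro AE_finite_allI) simp_all
qed

end

lemma bin_count_eq_load: "bin_count X k t \<omega> = load (\<lambda>s. X s \<omega>) k t"
  by (simp add: bin_count_def load_def)

lemma leads_iff_max_load:
  "k \<in> {1..d} \<Longrightarrow> leads {1..d} k (\<lambda>s. X s \<omega>) t \<longleftrightarrow> bin_count X k t \<omega> = max_load X d t \<omega>"
  by (simp add: leads_iff_Max max_load_def bin_count_eq_load)

lemma max_load_recurrence_if_leads_together:
  assumes every_pair: "\<forall>i\<in>{1..d}. \<forall>j\<in>{1..d}.
    \<exists>\<^sub>\<infinity>t. leads {1..d} i (\<lambda>t. X t \<omega>) t \<and> leads {1..d} j (\<lambda>t. X t \<omega>) t"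
  shows "(\<forall>i\<in>{1..d}. \<exists>\<^sub>\<infinity>t. bin_count X i t \<omega> = max_load X d t \<omega>)
    \<and> (\<forall>i\<in>{1..d}. \<forall>j\<in>{1..d}. \<exists>\<^sub>\<infinity>t.
          bin_count X i t \<omega> = bin_count X j t \<omega> \<and> bin_count X j t \<omega> = max_load X d t \<omega>)"
proof (intro conjI ballI)
  fix i j assume i: "i \<in> {1..d}" and j: "j \<in> {1..d}"
  from every_pair i j have "\<exists>\<^sub>\<infinity>t. leads {1..d} i (\<lambda>t. X t \<omega>) t \<and> leads {1..d} j (\<lambda>t. X t \<omega>) t"
    by blast
  then show "\<exists>\<^sub>\<infinity>t. bin_count X i t \<omega> = bin_count X j t \<omega> \<and> bin_count X j t \<omega> = max_load X d t \<omega>"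
  proof (rule INFM_mono)
    fix t assume "leads {1..d} i (\<lambda>t. X t \<omega>) t \<and> leads {1..d} j (\<lambda>t. X t \<omega>) t"
    then have "bin_count X i t \<omega> = max_load X d t \<omega>" "bin_count X j t \<omega> = max_load X d t \<omega>"
      using leads_iff_max_load[OF i, of X \<omega> t] leads_iff_max_load[OF j, of X \<omega> t] by simp_all
    then show "bin_count X i t \<omega> = bin_count X j t \<omega> \<and> bin_count X j t \<omega> = max_load X d t \<omega>"
      by simp
  qed
next
  fix i assume i: "i \<in> {1..d}"
  from every_pair i have "\<exists>\<^sub>\<infinity>t. leads {1..d} i (\<lambda>t. X t \<omega>) t \<and> leads {1..d} i (\<lambda>t. X t \<omega>) t"
    by blast
  then have "\<exists>\<^sub>\<infinity>t. leads {1..d} i (\<lambda>t. X t \<omega>) t"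
    by simp
  then show "\<exists>\<^sub>\<infinity>t. bin_count X i t \<omega> = max_load X d t \<omega>"
    by (rule INFM_mono) (use leads_iff_max_load[OF i, of X \<omega>] in simp)
qed

theorem lemma4p9:
  fixes M :: "'a measure" and X :: "nat \<Rightarrow> 'a \<Rightarrow> nat" and d :: nat
  assumes "prob_space M"
    and "d \<ge> 1"
    and "prob_space.indep_vars M (\<lambda>_. count_space UNIV) X {1..}"
    and "\<And>t. t \<ge> 1 \<Longrightarrow> distr M (count_space UNIV) (X t) = measure_pmf (pmf_of_set {1..d})"
  shows "AE \<omega> in M.
           (\<forall>i\<in>{1..d}. \<exists>\<^sub>\<infinity>t. bin_count X i t \<omega> = max_load X d t \<omega>)
         \<and> (\<forall>i\<in>{1..d}. \<forall>j\<in>{1..d}. \<exists>\<^sub>\<infinity>t.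
               bin_count X i t \<omega> = bin_count X j t \<omega> \<and> bin_count X j t \<omega> = max_load X d t \<omega>)"
proof -
  interpret iid_uniform_process M X "{1..d}"
    using assms by (intro iid_uniform_process.intro iid_uniform_process_axioms.intro) auto
  show ?thesis
    using AE_every_pair_leads_together_infinitely_often
    by (rule eventually_mono) (rule max_load_recurrence_if_leads_together)
qed

end
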